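(* Fix $\ell\geq2$, let $A=\ell\times\omega$, and fix a recursive bijection $\psi:(\ell-1)\times\omega\times\omega\to\omega$. For $\alpha\in\{0,1\}^\omega$ define $S_\alpha$ on $A$ by: $S_\alpha(a,b)$ holds iff $a=(i,n)$, $b=(i+1,m)$ for some $i<\ell-1$ with $\alpha_{\psi(i,n,m)}=1$. If $\alpha$ is a Kolmogorov–Chaitin complex string, then the ranked diagram $(A,S_\alpha)$, with levels $L_j=\{j\}\times\omega$, is $\ell$-generic, i.e. $\langle A,S_\alpha,\{0\}\times\omega,\ldots,\{\ell-1\}\times\omega\rangle$ is a model of $T_\ell$.
   Context: The signature has unary relations $L_0,\ldots,L_{\ell-1}$ and binary $S$. The theory $T_\ell$: (i) every $x$ satisfies some $L_j(x)$; (ii) no $x$ satisfies $L_i(x)\wedge L_j(x)$ for $i<j$; (iii) $S(x,y)$ and $L_i(x)$ with $i\le\ell-2$ imply $L_{i+1}(y)$; (iv) for each $i<\ell$ and all finite $X,Y\subseteq L_{i+1}$ with $X\cap Y=\emptyset$, $Z\subseteq L_i$, $X',Y'\subseteq L_{i-1}$ with $X'\cap Y'=\emptyset$ ($L_{-1},L_\ell$ read as empty), there is $z\in L_i\setminus Z$ with $S(z,x)$ for $x\in X$, $S(x',z)$ for $x'\in X'$, $\neg S(z,y)$ for $y\in Y$, $\neg S(y',z)$ for $y'\in Y'$. For $\alpha\in\{0,1\}^\omega$, $\overline{\alpha}(n)=\alpha_0\cdots\alpha_{n-1}$. Let $H(s)$ be the prefix-free Kolmogorov complexity of a binary word $s$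 relative to a fixed universal prefix algorithm. $\alpha$ is Kolmogorov–Chaitin complex if $\exists m\,\forall n\;H(\overline{\alpha}(n))\ge n-m$. *)

theory Defs
  imports Main "HOL-Library.Extended_Nat"
begin

datatype recf = Zf | Sf | Idf nat | Cnf recf "recf list" | Prf recf recf | Mnf recf

inductive rec_eval :: "recf \<Rightarrow> nat list \<Rightarrow> nat \<Rightarrow> bool" where
  zero: "rec_eval Zf xs 0"
| succ: "rec_eval Sf (x # xs) (Suc x)"
| proj: "i < length xs \<Longrightarrow> rec_eval (Idf i) xs (xs ! i)"
| comp: "length ys = length gs \<Longrightarrow> (\<forall>k < length gs. rec_eval (gs ! k) xs (ys ! k))
          \<Longrightarrow> rec_eval f ys z \<Longrightarrow> rec_eval (Cnf f gs) xs z"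
| pr0: "rec_eval f xs y \<Longrightarrow> rec_eval (Prf f g) (0 # xs) y"
| prS: "rec_eval (Prf f g) (n # xs) y \<Longrightarrow> rec_eval g (y # n # xs) z
          \<Longrightarrow> rec_eval (Prf f g) (Suc n # xs) z"
| mn: "rec_eval f (n # xs) 0 \<Longrightarrow> (\<forall>m < n. \<exists>y. rec_eval f (m # xs) (Suc y))
          \<Longrightarrow> rec_eval (Mnf f) xs n"

definition recursive3_on :: "(nat \<times> nat \<times> nat) set \<Rightarrow> (nat \<Rightarrow> nat \<Rightarrow> nat \<Rightarrow> nat) \<Rightarrow> bool" where
  "recursive3_on D f \<longleftrightarrow> (\<exists>c. \<forall>(i, n, m) \<in> D. rec_eval c [i, n, m] (f i n m))"

text \<open>Standard bijective coding of binary words as natural numbers.\<close>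
fun word_code :: "bool list \<Rightarrow> nat" where
  "word_code [] = 0"
| "word_code (b # w) = 2 * word_code w + (if b then 2 else 1)"

definition runs :: "recf \<Rightarrow> bool list \<Rightarrow> bool list \<Rightarrow> bool" where
  "runs c p s \<longleftrightarrow> rec_eval c [word_code p] (word_code s)"

definition halts :: "recf \<Rightarrow> bool list \<Rightarrow> bool" where
  "halts c p \<longleftrightarrow> (\<exists>s. runs c p s)"

definition prefix_free_machine :: "recf \<Rightarrow> bool" where
  "prefix_free_machine c \<longleftrightarrow>
     (\<forall>p r. halts c p \<longrightarrow> halts c (p @ r) \<longrightarrow> r = [])"

definition universal_prefix_machine :: "recf \<Rightarrow> bool" where
  "universal_prefix_machine u \<longleftrightarrow> prefix_free_machine u \<and>
     (\<forall>c. prefix_free_machine c \<longrightarrow>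
        (\<exists>k. \<forall>p s. runs c p s \<longrightarrow> (\<exists>q. runs u q s \<and> length q \<le> length p + k)))"

text \<open>Prefix-free Kolmogorov complexity relative to u (infinity if no program).\<close>
definition KH :: "recf \<Rightarrow> bool list \<Rightarrow> enat" where
  "KH u s = (INF p \<in> {p. runs u p s}. enat (length p))"

definition initial_segment :: "(nat \<Rightarrow> bool) \<Rightarrow> nat \<Rightarrow> bool list" where
  "initial_segment \<alpha> n = map \<alpha> [0..<n]"

definition KC_complex :: "recf \<Rightarrow> (nat \<Rightarrow> bool) \<Rightarrow> bool" where
  "KC_complex u \<alpha> \<longleftrightarrow> (\<exists>m::nat. \<forall>n. enat n \<le> KH u (initial_segment \<alpha> n) + enat m)"

text \<open>A structure with universe A, unary relations L 0, ..., L (ell-1) and binary S is a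
  model of T_ell. L_{-1} and L_ell are read as empty.\<close>
definition model_T :: "nat \<Rightarrow> 'a set \<Rightarrow> (nat \<Rightarrow> 'a set) \<Rightarrow> ('a \<Rightarrow> 'a \<Rightarrow> bool) \<Rightarrow> bool" where
  "model_T l A L S \<longleftrightarrow>
     (\<forall>x \<in> A. \<exists>j < l. x \<in> L j) \<and>
     (\<forall>x \<in> A. \<forall>i j. i < j \<and> j < l \<longrightarrow> \<not> (x \<in> L i \<and> x \<in> L j)) \<and>
     (\<forall>x \<in> A. \<forall>y \<in> A. \<forall>i. S x y \<and> x \<in> L i \<and> i + 2 \<le> l \<longrightarrow> y \<in> L (i + 1)) \<and>
     (\<forall>i < l. \<forall>X Y Z X' Y'.
        let Up = (if i + 1 < l then A \<inter> L (i + 1) else {});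
            Lo = (if 0 < i then A \<inter> L (i - 1) else {})
        in finite X \<and> finite Y \<and> X \<subseteq> Up \<and> Y \<subseteq> Up \<and> X \<inter> Y = {} \<and>
           finite Z \<and> Z \<subseteq> A \<inter> L i \<and>
           finite X' \<and> finite Y' \<and> X' \<subseteq> Lo \<and> Y' \<subseteq> Lo \<and> X' \<inter> Y' = {} \<longrightarrow>
           (\<exists>z \<in> (A \<inter> L i) - Z. (\<forall>x \<in> X. S z x) \<and> (\<forall>x' \<in> X'. S x' z) \<and>
                                  (\<forall>y \<in> Y. \<not> S z y) \<and> (\<forall>y' \<in> Y'. \<not> S y' z)))"

definition S_alpha :: "nat \<Rightarrow> (nat \<Rightarrow> nat \<Rightarrow> nat \<Rightarrow> nat) \<Rightarrow> (nat \<Rightarrow> bool)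
                       \<Rightarrow> nat \<times> nat \<Rightarrow> nat \<times> nat \<Rightarrow> bool" where
  "S_alpha l \<psi> \<alpha> a b \<longleftrightarrow>
     (\<exists>i n m. a = (i, n) \<and> b = (i + 1, m) \<and> i < l - 1 \<and> \<alpha> (\<psi> i n m))"

end

theory Submission
  imports Defs
begin

(* Suppose an instance of the extension axiom at level i had no witness (i, n) with n \<ge> n0.
  Then for every n \<ge> n0 the bits of \<alpha> at the finitely many positions \<psi>(i, n, m) and
  \<psi>(i - 1, m, n) named by the instance miss one fixed pattern of k bits. As \<psi> is a recursive
  injection, these positions form computable pairwise disjoint blocks, and of the words of
  length N that miss the pattern on B such blocks only a fraction (1 - 2^-k)^B \<le> 2^-(2t+1)
  remains when B = (2t + 1) 2^k. So a prefix-free machine reading 1^t 0 followed by the rank of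
  such a word, written with N - (2t + 1) bits, prints the initial segment of \<alpha> of length N
  from a program of length N - t. Once t exceeds the simulation constant of the universal
  machine plus the randomness deficiency of \<alpha>, this contradicts the complexity of \<alpha>. *)

section \<open>Computable functions on argument lists\<close>

lemma rec_eval_functional:
  assumes "rec_eval c xs y" and "rec_eval c xs y'"
  shows "y' = y"
  using assms
proof (induction arbitrary: y' rule: rec_eval.induct)
  case (pr0 f xs y g)
  from pr0.prems show ?case by (cases rule: rec_eval.cases) (use pr0 in auto)
next
  case (comp ys gs xs f z)
  from comp.prems show ?case
  proof (cases rule: rec_eval.cases)
    case (comp ys')
    have "ys' = ys"
      by (rule nth_equalityI) (use comp comp.hyps comp.IH in auto)
    then show ?thesis using comp comp.IH by auto
  qed
next
  case (prS f g n xs y z)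
  from prS.prems show ?case by (cases rule: rec_eval.cases) (use prS in auto)
next
  case (mn f n xs)
  note outer = mn
  from mn.prems show ?case
  proof (cases rule: rec_eval.cases)
    case mn
    show ?thesis
    proof (rule linorder_cases[of y' n])
      assume "y' < n"
      then obtain y where "\<forall>v. rec_eval f (y' # xs) v \<longrightarrow> v = Suc y" using outer by blast
      then show ?thesis using mn by auto
    next
      assume "n < y'"
      then obtain y where "rec_eval f (n # xs) (Suc y)" using mn by blast
      then show ?thesis using outer by fastforce
    qed
  qed
qed (auto elim: rec_eval.cases[of Zf] rec_eval.cases[of Sf] rec_eval.cases[of "Idf _"])

definition computable :: "nat \<Rightarrow> (nat list \<Rightarrow> nat) \<Rightarrow> bool" where
  "computable n f \<longleftrightarrow> (\<exists>c. \<forall>xs. length xs = n \<longrightarrow> rec_eval c xs (f xs))"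

definition decidable :: "nat \<Rightarrow> (nat list \<Rightarrow> bool) \<Rightarrow> bool" where
  "decidable n P \<longleftrightarrow> computable n (\<lambda>xs. of_bool (P xs))"

lemma computable_cong:
  "computable n f \<Longrightarrow> (\<And>xs. length xs = n \<Longrightarrow> f xs = g xs) \<Longrightarrow> computable n g"
  unfolding computable_def by metis

lemma decidable_cong:
  "decidable n P \<Longrightarrow> (\<And>xs. length xs = n \<Longrightarrow> P xs = Q xs) \<Longrightarrow> decidable n Q"
  unfolding decidable_def by (erule computable_cong) simp

lemma computable_zero: "computable n (\<lambda>xs. 0)"
  unfolding computable_def by (auto intro: rec_eval.zero)

lemma computable_proj: "i < n \<Longrightarrow> computable n (\<lambda>xs. xs ! i)"
  unfolding computable_def by (auto intro: rec_eval.proj)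

lemma computable_compose1:
  assumes "computable 1 (\<lambda>xs. F (xs ! 0))" and "computable n f"
  shows "computable n (\<lambda>xs. F (f xs))"
proof -
  obtain cF cf where F: "\<And>xs. length xs = 1 \<Longrightarrow> rec_eval cF xs (F (xs ! 0))"
    and f: "\<And>xs. length xs = n \<Longrightarrow> rec_eval cf xs (f xs)"
    using assms unfolding computable_def by blast
  have "rec_eval (Cnf cF [cf]) xs (F (f xs))" if "length xs = n" for xs
    using F[of "[f xs]"] f[OF that] by (intro rec_eval.comp[where ys = "[f xs]"]) auto
  then show ?thesis unfolding computable_def by blast
qed

lemma computable_compose2:
  assumes "computable 2 (\<lambda>xs. F (xs ! 0) (xs ! 1))" and "computable n f" and "computable n g"
  shows "computable n (\<lambda>xs. F (f xs) (g xs))"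
proof -
  obtain cF cf cg where F: "\<And>xs. length xs = 2 \<Longrightarrow> rec_eval cF xs (F (xs ! 0) (xs ! 1))"
    and f: "\<And>xs. length xs = n \<Longrightarrow> rec_eval cf xs (f xs)"
    and g: "\<And>xs. length xs = n \<Longrightarrow> rec_eval cg xs (g xs)"
    using assms unfolding computable_def by blast
  have "rec_eval (Cnf cF [cf, cg]) xs (F (f xs) (g xs))" if "length xs = n" for xs
    using F[of "[f xs, g xs]"] f[OF that] g[OF that]
    by (intro rec_eval.comp[where ys = "[f xs, g xs]"]) (auto simp: less_Suc_eq)
  then show ?thesis unfolding computable_def by blast
qed

lemma computable_Suc: "computable n f \<Longrightarrow> computable n (\<lambda>xs. Suc (f xs))"
  by (rule computable_compose1[where F = Suc])
    (auto simp: computable_def length_Suc_conv intro!: exI[of _ Sf] rec_eval.succ)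

lemma computable_const: "computable n (\<lambda>xs. k)"
  by (induction k) (auto intro: computable_zero computable_Suc)

lemma computable_fix_first_arg:
  assumes "\<And>a b. rec_eval c [i, a, b] (F a b)"
  shows "computable 2 (\<lambda>xs. F (xs ! 0) (xs ! 1))"
proof -
  obtain ci where ci: "\<And>xs. length xs = 2 \<Longrightarrow> rec_eval ci xs i"
    using computable_const[of 2 i] unfolding computable_def by blast
  have eval: "rec_eval (Cnf c [ci, Idf 0, Idf 1]) [a, b] (F a b)" for a b
    using ci[of "[a, b]"] rec_eval.proj[of 0 "[a, b]"] rec_eval.proj[of 1 "[a, b]"] assms
    by (intro rec_eval.comp[where ys = "[i, a, b]"]) (auto simp: less_Suc_eq numeral_eq_Suc)
  show ?thesis unfolding computable_def
  proof (intro exI allI impI)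
    fix xs :: "nat list"
    assume "length xs = 2"
    then obtain a b where "xs = [a, b]" by (auto simp: numeral_2_eq_2 length_Suc_conv)
    then show "rec_eval (Cnf c [ci, Idf 0, Idf 1]) xs (F (xs ! 0) (xs ! 1))" using eval by simp
  qed
qed

lemma computable_prim_rec:
  assumes "computable n (h 0)"
    and "computable (Suc (Suc n)) (\<lambda>ys. g (ys ! 0) (ys ! 1) (drop 2 ys))"
    and "\<And>a xs. h (Suc a) xs = g (h a xs) a xs"
  shows "computable (Suc n) (\<lambda>xs. h (hd xs) (tl xs))"
proof -
  obtain cf cg where f: "\<And>xs. length xs = n \<Longrightarrow> rec_eval cf xs (h 0 xs)"
    and g: "\<And>ys. length ys = Suc (Suc n) \<Longrightarrow> rec_eval cg ys (g (ys ! 0) (ys ! 1) (drop 2 ys))"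
    using assms(1,2) unfolding computable_def by blast
  have "rec_eval (Prf cf cg) (a # xs) (h a xs)" if "length xs = n" for a xs
  proof (induction a)
    case 0
    then show ?case using f[OF that] by (rule rec_eval.pr0)
  next
    case (Suc a)
    then show ?case using g[of "h a xs # a # xs"] that assms(3) by (auto intro: rec_eval.prS)
  qed
  then show ?thesis unfolding computable_def by (metis length_Suc_conv list.sel(1,3))
qed

lemma computable_prim_rec_unary:
  assumes "computable 2 (\<lambda>ys. g (ys ! 0) (ys ! 1))" and "\<And>a. h (Suc a) = g (h a) a"
  shows "computable 1 (\<lambda>xs. h (xs ! 0))"
proof -
  have "computable (Suc 0) (\<lambda>xs. h (hd xs))"
    using computable_prim_rec[of 0 "\<lambda>a xs. h a" "\<lambda>r a xs. g r a"] assms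
    by (simp add: numeral_2_eq_2 computable_const)
  then show ?thesis unfolding One_nat_def by (rule computable_cong) (auto simp: length_Suc_conv)
qed

lemma computable_prim_rec_binary:
  assumes "computable 1 (\<lambda>xs. h 0 (xs ! 0))"
    and "computable 3 (\<lambda>ys. g (ys ! 0) (ys ! 1) (ys ! 2))"
    and "\<And>a b. h (Suc a) b = g (h a b) a b"
  shows "computable 2 (\<lambda>xs. h (xs ! 0) (xs ! 1))"
proof -
  have "computable 3 (\<lambda>ys. g (ys ! 0) (ys ! 1) (drop 2 ys ! 0))"
    using assms(2) by (rule computable_cong) simp
  moreover have "computable 1 (\<lambda>xs. (\<lambda>a xs. h a (xs ! 0)) 0 xs)"
    using assms(1) by simp
  ultimately have "computable (Suc (Suc 0)) (\<lambda>xs. h (hd xs) (tl xs ! 0))"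
    using computable_prim_rec[of 1 "\<lambda>a xs. h a (xs ! 0)" "\<lambda>r a xs. g r a (xs ! 0)"] assms(3)
    by (simp add: numeral_3_eq_3)
  then show ?thesis unfolding numeral_2_eq_2 by (rule computable_cong) (auto simp: length_Suc_conv)
qed

lemma computable_add: "computable n f \<Longrightarrow> computable n g \<Longrightarrow> computable n (\<lambda>xs. f xs + g xs)"
proof (rule computable_compose2[where F = "(+)"])
  show "computable 2 (\<lambda>xs. xs ! 0 + xs ! 1)"
  proof (rule computable_prim_rec_binary[where h = "(+)" and g = "\<lambda>r a b. Suc r"])
    show "computable 1 (\<lambda>xs. 0 + xs ! 0)" using computable_proj[of 0 1] by simp
    show "computable 3 (\<lambda>ys. Suc (ys ! 0))" by (intro computable_Suc computable_proj) simp
  qed simp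
qed

lemma computable_shifted_args:
  assumes "\<And>a b. rec_eval c [i, a, b] (F a b)"
  shows "computable 1 (\<lambda>xs. F (n0 + xs ! 0) m)" and "computable 1 (\<lambda>xs. F m (n0 + xs ! 0))"
  by (intro computable_compose2[OF computable_fix_first_arg[OF assms]] computable_add
      computable_const computable_proj; simp)+

lemma computable_mult: "computable n f \<Longrightarrow> computable n g \<Longrightarrow> computable n (\<lambda>xs. f xs * g xs)"
proof (rule computable_compose2[where F = "(*)"])
  show "computable 2 (\<lambda>xs. xs ! 0 * xs ! 1)"
  proof (rule computable_prim_rec_binary[where h = "(*)" and g = "\<lambda>r a b. b + r"])
    show "computable 1 (\<lambda>xs. 0 * xs ! 0)" using computable_zero[of 1] by simp
    show "computable 3 (\<lambda>ys. ys ! 2 + ys ! 0)" by (intro computable_add computable_proj) simp_all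
  qed simp
qed

lemma computable_pred: "computable n f \<Longrightarrow> computable n (\<lambda>xs. f xs - 1)"
proof (rule computable_compose1[where F = "\<lambda>a. a - 1"])
  show "computable 1 (\<lambda>xs. xs ! 0 - 1)"
  proof (rule computable_prim_rec_unary[where h = "\<lambda>a. a - 1" and g = "\<lambda>r a. a"])
    show "computable 2 (\<lambda>ys. ys ! 1)" by (rule computable_proj) simp
  qed simp
qed

lemma computable_diff: "computable n f \<Longrightarrow> computable n g \<Longrightarrow> computable n (\<lambda>xs. f xs - g xs)"
proof (rule computable_compose2[where F = "\<lambda>a b. b - a" and f = g and g = f])
  show "computable 2 (\<lambda>xs. xs ! 1 - xs ! 0)"
  proof (rule computable_prim_rec_binary[where h = "\<lambda>a b. b - a" and g = "\<lambda>r a b. r - 1"])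
    show "computable 1 (\<lambda>xs. xs ! 0 - 0)" using computable_proj[of 0 1] by simp
    show "computable 3 (\<lambda>ys. ys ! 0 - 1)" by (intro computable_pred computable_proj) simp
  qed simp
qed

lemma computable_power2: "computable n f \<Longrightarrow> computable n (\<lambda>xs. 2 ^ f xs)"
proof (rule computable_compose1[where F = "\<lambda>a. 2 ^ a"])
  show "computable 1 (\<lambda>xs. 2 ^ (xs ! 0))"
  proof (rule computable_prim_rec_unary[where h = "\<lambda>a. 2 ^ a" and g = "\<lambda>r a. 2 * r"])
    show "computable 2 (\<lambda>ys. 2 * ys ! 0)"
      by (intro computable_mult computable_const computable_proj) simp
  qed simp
qed

lemma computable_mod2: "computable n f \<Longrightarrow> computable n (\<lambda>xs. f xs mod 2)"
proof (rule computable_compose1[where F = "\<lambda>a. a mod 2"])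
  show "computable 1 (\<lambda>xs. xs ! 0 mod 2)"
  proof (rule computable_prim_rec_unary[where h = "\<lambda>a. a mod 2" and g = "\<lambda>r a. 1 - r"])
    show "computable 2 (\<lambda>ys. 1 - ys ! 0)"
      by (intro computable_diff computable_const computable_proj) simp
  qed (simp add: mod_Suc)
qed

lemma computable_div2: "computable n f \<Longrightarrow> computable n (\<lambda>xs. f xs div 2)"
proof (rule computable_compose1[where F = "\<lambda>a. a div 2"])
  show "computable 1 (\<lambda>xs. xs ! 0 div 2)"
  proof (rule computable_prim_rec_unary[where h = "\<lambda>a. a div 2" and g = "\<lambda>r a. r + a mod 2"])
    show "computable 2 (\<lambda>ys. ys ! 0 + ys ! 1 mod 2)"
      by (intro computable_add computable_mod2 computable_proj) simp_all
  qed presburger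
qed

lemma computable_sum_lessThan:
  assumes "computable 2 (\<lambda>xs. F (xs ! 0) (xs ! 1))" and "computable n g" and "computable n h"
  shows "computable n (\<lambda>xs. \<Sum>i<g xs. F i (h xs))"
proof (rule computable_compose2[where F = "\<lambda>a b. \<Sum>i<a. F i b", OF _ assms(2,3)])
  show "computable 2 (\<lambda>xs. \<Sum>i<xs ! 0. F i (xs ! 1))"
  proof (rule computable_prim_rec_binary[where h = "\<lambda>a b. \<Sum>i<a. F i b"
        and g = "\<lambda>r a b. r + F a b"])
    show "computable 1 (\<lambda>xs. \<Sum>i<0. F i (xs ! 0))" using computable_zero[of 1] by simp
    show "computable 3 (\<lambda>ys. ys ! 0 + F (ys ! 1) (ys ! 2))"
      by (intro computable_add computable_compose2[OF assms(1)] computable_proj) simp_all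
  qed simp
qed

lemma computable_sum_below_const:
  assumes "\<And>j. j < (k::nat) \<Longrightarrow> computable n (F j)"
  shows "computable n (\<lambda>xs. \<Sum>j<k. F j xs)"
  using assms
proof (induction k)
  case 0
  show ?case using computable_zero by simp
next
  case (Suc k)
  then have "computable n (\<lambda>xs. (\<Sum>j<k. F j xs) + F k xs)"
    by (intro computable_add) simp_all
  then show ?case by simp
qed

lemma decidable_const: "decidable n (\<lambda>xs. P)"
  unfolding decidable_def by (rule computable_const)

lemma decidable_le:
  assumes "computable n f" and "computable n g"
  shows "decidable n (\<lambda>xs. f xs \<le> g xs)"
proof -
  have "computable n (\<lambda>xs. 1 - (f xs - g xs))"
    by (intro computable_diff computable_const assms)
  then show ?thesis unfolding decidable_def by (rule computable_cong) simp
qed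

lemma decidable_not:
  assumes "decidable n P"
  shows "decidable n (\<lambda>xs. \<not> P xs)"
proof -
  have "computable n (\<lambda>xs. 1 - of_bool (P xs))"
    using assms unfolding decidable_def by (intro computable_diff computable_const)
  then show ?thesis unfolding decidable_def by (rule computable_cong) simp
qed

lemma decidable_conj: "decidable n P \<Longrightarrow> decidable n Q \<Longrightarrow> decidable n (\<lambda>xs. P xs \<and> Q xs)"
  unfolding decidable_def of_bool_conj by (rule computable_mult)

lemma decidable_less:
  assumes "computable n f" and "computable n g"
  shows "decidable n (\<lambda>xs. f xs < g xs)"
proof -
  have "decidable n (\<lambda>xs. \<not> g xs \<le> f xs)" by (intro decidable_not decidable_le assms)
  then show ?thesis by (rule decidable_cong) (simp add: not_le)
qed

lemma decidable_eq:
  assumes "computable n f" and "computable n g"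
  shows "decidable n (\<lambda>xs. f xs = g xs)"
proof -
  have "decidable n (\<lambda>xs. f xs \<le> g xs \<and> g xs \<le> f xs)" by (intro decidable_conj decidable_le assms)
  then show ?thesis by (rule decidable_cong) auto
qed

lemma decidable_iff:
  assumes "decidable n P" and "decidable n Q"
  shows "decidable n (\<lambda>xs. P xs \<longleftrightarrow> Q xs)"
proof -
  have "decidable n (\<lambda>xs. of_bool (P xs) = (of_bool (Q xs) :: nat))"
    using assms[unfolded decidable_def] by (rule decidable_eq)
  then show ?thesis by (rule decidable_cong) (simp add: of_bool_eq_iff)
qed

lemma decidable_ball:
  assumes "decidable 2 (\<lambda>xs. P (xs ! 0) (xs ! 1))" and "computable n g" and "computable n h"
  shows "decidable n (\<lambda>xs. \<forall>i<g xs. P i (h xs))"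
proof -
  have "computable 2 (\<lambda>xs. of_bool (\<not> P (xs ! 0) (xs ! 1)))"
    using decidable_not[OF assms(1)] unfolding decidable_def .
  then have "computable n (\<lambda>xs. \<Sum>i<g xs. of_bool (\<not> P i (h xs)))"
    using computable_sum_lessThan[where F = "\<lambda>a b. of_bool (\<not> P a b)"] assms(2,3) by blast
  then have "decidable n (\<lambda>xs. (\<Sum>i<g xs. of_bool (\<not> P i (h xs))) \<le> (0::nat))"
    by (rule decidable_le[OF _ computable_zero])
  then show ?thesis by (rule decidable_cong) auto
qed

lemma decidable_all_below_const:
  assumes "\<And>j. j < (k::nat) \<Longrightarrow> decidable n (P j)"
  shows "decidable n (\<lambda>xs. \<forall>j<k. P j xs)"
  using assms
proof (induction k)
  case 0
  show ?case using computable_const[of n 1] by (simp add: decidable_def)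
next
  case (Suc k)
  then have "decidable n (\<lambda>xs. (\<forall>j<k. P j xs) \<and> P k xs)" by (intro decidable_conj) simp_all
  then show ?case by (rule decidable_cong) (auto simp: less_Suc_eq)
qed

text \<open>\<open>Mnf\<close> searches over the first argument, hence the argument order of \<open>R\<close>.\<close>
lemma code_of_decidable_graph:
  assumes "decidable 2 (\<lambda>xs. R (xs ! 1) (xs ! 0))"
    and functional: "\<And>x y y'. R x y \<Longrightarrow> R x y' \<Longrightarrow> y = y'"
  shows "\<exists>c. \<forall>x y. rec_eval c [x] y \<longleftrightarrow> R x y"
proof -
  obtain cF where cF: "\<And>xs. length xs = 2 \<Longrightarrow> rec_eval cF xs (of_bool (\<not> R (xs ! 1) (xs ! 0)))"
    using decidable_not[OF assms(1)] unfolding decidable_def computable_def by blast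
  have eval: "rec_eval cF [y, x] v \<longleftrightarrow> v = of_bool (\<not> R x y)" for x y v
    using cF[of "[y, x]"] rec_eval_functional by fastforce
  have "rec_eval (Mnf cF) [x] y \<longleftrightarrow> R x y" for x y
  proof
    assume "rec_eval (Mnf cF) [x] y"
    then show "R x y" by (cases rule: rec_eval.cases) (auto simp: eval)
  next
    assume "R x y"
    then show "rec_eval (Mnf cF) [x] y"
      using functional by (intro rec_eval.mn) (auto simp: eval intro: exI[of _ 0])
  qed
  then show ?thesis by blast
qed

section \<open>Binary words and their codes\<close>

lemma inj_word_code: "inj word_code"
proof (rule injI)
  show "word_code v = word_code w \<Longrightarrow> v = w" for v w
  proof (induction v arbitrary: w)
    case Nil
    then show ?case by (cases w) (auto split: if_splits)
  next
    case (Cons a v)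
    then show ?case by (cases w) (auto split: if_splits, presburger+)
  qed
qed

lemma surj_word_code: "surj word_code"
proof -
  have "\<exists>w. word_code w = y" for y
  proof (induction y rule: less_induct)
    case (less y)
    show ?case
    proof (cases "y = 0")
      case True
      then show ?thesis by (intro exI[of _ "[]"]) simp
    next
      case False
      then obtain w where w: "word_code w = (y - 1) div 2" using less by fastforce
      show ?thesis
      proof (cases "even y")
        case True
        then show ?thesis using False w by (intro exI[of _ "True # w"]) auto
      next
        case odd: False
        then show ?thesis using w by (intro exI[of _ "False # w"]) (auto elim!: oddE)
      qed
    qed
  qed
  then show ?thesis by (metis surjI)
qed

lemma word_code_bounds: "2 ^ length w \<le> word_code w + 1 \<and> word_code w + 2 \<le> 2 ^ (length w + 1)"
  by (induction w) auto

lemma word_code_append: "word_code (v @ w) = word_code v + 2 ^ length v * word_code w"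
  by (induction v) auto

text \<open>The codes of the words of length \<open>L\<close> form the interval from \<open>2 ^ L - 1\<close> to \<open>2 ^ (L + 1) - 2\<close>.\<close>
definition codes_length :: "nat \<Rightarrow> nat \<Rightarrow> bool" where
  "codes_length L y \<longleftrightarrow> 2 ^ L \<le> y + 1 \<and> y + 2 \<le> 2 ^ (L + 1)"

lemma codes_length_word_code: "codes_length L (word_code w) \<longleftrightarrow> length w = L"
proof
  assume bounds: "codes_length L (word_code w)"
  show "length w = L"
  proof (rule linorder_cases[of "length w" L])
    assume "length w < L"
    then have "2 ^ (length w + 1) \<le> (2::nat) ^ L" by (intro power_increasing) auto
    then show ?thesis using bounds word_code_bounds[of w] unfolding codes_length_def by linarith
  next
    assume "L < length w"
    then have "2 ^ (L + 1) \<le> (2::nat) ^ length w" by (intro power_increasing) auto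
    then show ?thesis using bounds word_code_bounds[of w] unfolding codes_length_def by linarith
  qed
qed (use word_code_bounds in \<open>auto simp: codes_length_def\<close>)

lemma decidable_codes_length:
  "computable n L \<Longrightarrow> computable n y \<Longrightarrow> decidable n (\<lambda>xs. codes_length (L xs) (y xs))"
  unfolding codes_length_def
  by (intro decidable_conj decidable_le computable_power2 computable_add computable_const)

definition code_tl :: "nat \<Rightarrow> nat" where
  "code_tl y = (y - 1) div 2"

lemma funpow_code_tl_word_code: "(code_tl ^^ j) (word_code w) = word_code (drop j w)"
proof (induction j)
  case (Suc j)
  then show ?case by (cases "drop j w") (auto simp: code_tl_def drop_Suc tl_drop[symmetric])
qed simp

lemma computable_funpow_code_tl:
  "computable n f \<Longrightarrow> computable n g \<Longrightarrow> computable n (\<lambda>xs. (code_tl ^^ f xs) (g xs))"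
proof (rule computable_compose2[where F = "\<lambda>a b. (code_tl ^^ a) b"])
  show "computable 2 (\<lambda>xs. (code_tl ^^ (xs ! 0)) (xs ! 1))"
  proof (rule computable_prim_rec_binary[where h = "\<lambda>a b. (code_tl ^^ a) b"
        and g = "\<lambda>r a b. (r - 1) div 2"])
    show "computable 1 (\<lambda>xs. (code_tl ^^ 0) (xs ! 0))" using computable_proj[of 0 1] by simp
    show "computable 3 (\<lambda>ys. (ys ! 0 - 1) div 2)"
      by (intro computable_div2 computable_pred computable_proj) simp
  qed (simp add: code_tl_def)
qed

definition code_bit :: "nat \<Rightarrow> nat \<Rightarrow> bool" where
  "code_bit y j \<longleftrightarrow> even ((code_tl ^^ j) y) \<and> 0 < (code_tl ^^ j) y"

lemma code_bit_word_code: "code_bit (word_code w) j \<longleftrightarrow> j < length w \<and> w ! j"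
proof (cases "j < length w")
  case True
  then have "drop j w = w ! j # drop (Suc j) w" by (simp add: Cons_nth_drop_Suc)
  then show ?thesis unfolding code_bit_def funpow_code_tl_word_code using True by auto
qed (simp add: code_bit_def funpow_code_tl_word_code)

lemma decidable_code_bit:
  "computable n f \<Longrightarrow> computable n g \<Longrightarrow> decidable n (\<lambda>xs. code_bit (f xs) (g xs))"
proof -
  assume "computable n f" and "computable n g"
  then have "decidable n (\<lambda>xs. (code_tl ^^ g xs) (f xs) mod 2 = 0 \<and> 0 < (code_tl ^^ g xs) (f xs))"
    by (intro decidable_conj decidable_eq decidable_less computable_mod2 computable_funpow_code_tl
        computable_const)
  then show ?thesis by (rule decidable_cong) (auto simp: code_bit_def)
qed

lemma word_code_unary_header:
  "word_code (replicate t True @ False # w) + 2 = 2 ^ (t + 1) + 2 ^ t + 2 ^ (t + 1) * word_code w"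
proof -
  have "word_code (replicate t True) + 2 = 2 ^ (t + 1)" by (induction t) auto
  then show ?thesis by (simp add: word_code_append algebra_simps)
qed

lemma unary_header_eq_iff:
  "replicate t True @ False # v = replicate t' True @ False # w \<longleftrightarrow> t = t' \<and> v = w"
proof (induction t arbitrary: t')
  case 0
  then show ?case by (cases t') auto
next
  case (Suc t)
  then show ?case by (cases t') auto
qed

text \<open>The number of leading ones of the word coded by \<open>x\<close>; the code \<open>x\<close> bounds it.\<close>
definition unary_prefix :: "nat \<Rightarrow> nat" where
  "unary_prefix x = (\<Sum>j<x. of_bool (\<forall>j'<Suc j. code_bit x j'))"

definition after_unary_prefix :: "nat \<Rightarrow> nat" where
  "after_unary_prefix x = (code_tl ^^ Suc (unary_prefix x)) x"

lemma unary_prefix_word_code: "unary_prefix (word_code (replicate t True @ False # w)) = t"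
proof -
  let ?x = "word_code (replicate t True @ False # w)"
  have ones: "code_bit ?x j" if "j < t" for j
    using that unfolding code_bit_word_code by (simp add: nth_append)
  have zero: "\<not> code_bit ?x t"
    unfolding code_bit_word_code by (simp add: nth_append)
  have leading: "(\<forall>j'<Suc j. code_bit ?x j') \<longleftrightarrow> j < t" for j
  proof
    assume "\<forall>j'<Suc j. code_bit ?x j'"
    then show "j < t" using zero by (meson not_less not_less_eq)
  qed (simp add: ones)
  have "t < 2 ^ t" by (rule less_exp)
  moreover have "(2::nat) ^ (t + 1) = 2 * 2 ^ t" by simp
  ultimately have "t \<le> ?x" using word_code_unary_header[of t w] by linarith
  then have "{j. j < ?x \<and> j < t} = {..<t}" by auto
  then show ?thesis unfolding unary_prefix_def leading by (simp add: sum.If_cases Int_def)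
qed

lemma after_unary_prefix_word_code:
  "after_unary_prefix (word_code (replicate t True @ False # w)) = word_code w"
  unfolding after_unary_prefix_def unary_prefix_word_code funpow_code_tl_word_code by simp

lemma computable_unary_prefix: "computable n f \<Longrightarrow> computable n (\<lambda>xs. unary_prefix (f xs))"
proof -
  assume f: "computable n f"
  have "decidable 2 (\<lambda>xs. code_bit (xs ! 1) (xs ! 0))"
    by (intro decidable_code_bit computable_proj) simp_all
  then have "decidable 2 (\<lambda>xs. \<forall>i<Suc (xs ! 0). code_bit (xs ! 1) i)"
    by (intro decidable_ball[where P = "\<lambda>a b. code_bit b a"] computable_Suc computable_proj) simp_all
  then have "computable 2 (\<lambda>xs. of_bool (\<forall>i<Suc (xs ! 0). code_bit (xs ! 1) i))"
    unfolding decidable_def .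
  then have "computable n (\<lambda>xs. \<Sum>i<f xs. of_bool (\<forall>j'<Suc i. code_bit (f xs) j'))"
    by (intro computable_sum_lessThan[where F = "\<lambda>a b. of_bool (\<forall>i<Suc a. code_bit b i)"] f)
  then show ?thesis unfolding unary_prefix_def .
qed

lemma computable_after_unary_prefix:
  "computable n f \<Longrightarrow> computable n (\<lambda>xs. after_unary_prefix (f xs))"
  unfolding after_unary_prefix_def
  by (intro computable_funpow_code_tl computable_Suc computable_unary_prefix)

lemma prefix_free_machineI:
  assumes "\<And>p. halts c p \<Longrightarrow> \<exists>t w. p = replicate t True @ False # w \<and> length w = L t"
  shows "prefix_free_machine c"
  unfolding prefix_free_machine_def
proof (intro allI impI)
  fix p r
  assume "halts c p" and "halts c (p @ r)"
  then obtain t w t' w' where "p = replicate t True @ False # w" "length w = L t"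
    and "p @ r = replicate t' True @ False # w'" "length w' = L t'"
    using assms by blast
  then show "r = []" using unary_header_eq_iff[of t "w @ r" t' w'] by auto
qed

lemma KC_complex_incompressible:
  assumes "universal_prefix_machine u" and "KC_complex u \<alpha>" and "prefix_free_machine c"
  shows "\<exists>k. \<forall>n p. runs c p (initial_segment \<alpha> n) \<longrightarrow> n \<le> length p + k"
proof -
  obtain k where k: "\<And>p s. runs c p s \<Longrightarrow> \<exists>q. runs u q s \<and> length q \<le> length p + k"
    using assms(1,3) unfolding universal_prefix_machine_def by blast
  obtain m where m: "\<And>n. enat n \<le> KH u (initial_segment \<alpha> n) + enat m"
    using assms(2) unfolding KC_complex_def by blast
  have "n \<le> length p + (k + m)" if run: "runs c p (initial_segment \<alpha> n)" for n p
  proof -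
    obtain q where q: "runs u q (initial_segment \<alpha> n)" "length q \<le> length p + k"
      using k[OF run] by blast
    have "enat n \<le> KH u (initial_segment \<alpha> n) + enat m" by (rule m)
    also have "\<dots> \<le> enat (length q) + enat m"
      unfolding KH_def by (intro add_right_mono INF_lower) (simp add: q(1))
    finally show ?thesis using q(2) by simp
  qed
  then show ?thesis by blast
qed

section \<open>Counting words that miss a pattern on disjoint blocks\<close>

definition avoiding_words ::
    "nat \<Rightarrow> nat \<Rightarrow> (nat \<Rightarrow> nat \<Rightarrow> nat) \<Rightarrow> (nat \<Rightarrow> bool) \<Rightarrow> nat \<Rightarrow> bool list set"
  where "avoiding_words N k pos \<beta> B =
    {w. length w = N \<and> (\<forall>b<B. \<not> (\<forall>j<k. w ! pos j b = \<beta> j))}"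

lemma finite_avoiding_words: "finite (avoiding_words N k pos \<beta> B)"
proof (rule finite_subset)
  show "avoiding_words N k pos \<beta> B \<subseteq> {w. set w \<subseteq> UNIV \<and> length w = N}"
    unfolding avoiding_words_def by auto
qed (use finite_lists_length_eq[of "UNIV :: bool set" N] in simp)

lemma card_le_mult_card_image:
  assumes "finite A" and "\<And>v. v \<in> f ` A \<Longrightarrow> card {a \<in> A. f a = v} \<le> K"
  shows "card A \<le> K * card (f ` A)"
proof -
  have "A = (\<Union>v\<in>f ` A. {a \<in> A. f a = v})" by auto
  then have "card A \<le> (\<Sum>v\<in>f ` A. card {a \<in> A. f a = v})"
    using card_UN_le[of "f ` A" "\<lambda>v. {a \<in> A. f a = v}"] assms(1) by simp
  also have "\<dots> \<le> (\<Sum>v\<in>f ` A. K)" by (rule sum_mono) (rule assms(2))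
  finally show ?thesis by (simp add: mult.commute)
qed

definition overwrite :: "nat set \<Rightarrow> (nat \<Rightarrow> bool) \<Rightarrow> bool list \<Rightarrow> bool list" where
  "overwrite P v w = map (\<lambda>i. if i \<in> P then v i else w ! i) [0..<length w]"

lemma length_overwrite [simp]: "length (overwrite P v w) = length w"
  by (simp add: overwrite_def)

lemma nth_overwrite: "i < length w \<Longrightarrow> overwrite P v w ! i = (if i \<in> P then v i else w ! i)"
  by (simp add: overwrite_def)

lemma card_overwrite_fibre_le:
  assumes "finite P"
  shows "card {w \<in> W. overwrite P v w = u} \<le> 2 ^ card P"
proof -
  let ?F = "{w \<in> W. overwrite P v w = u}"
  have "inj_on (\<lambda>w. {i \<in> P. w ! i}) ?F"
  proof (rule inj_onI)
    fix w1 w2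
    assume w1: "w1 \<in> ?F" and w2: "w2 \<in> ?F" and same: "{i \<in> P. w1 ! i} = {i \<in> P. w2 ! i}"
    then have len: "length w1 = length w2" by (metis (mono_tags) length_overwrite mem_Collect_eq)
    show "w1 = w2"
    proof (rule nth_equalityI)
      fix i
      assume i: "i < length w1"
      show "w1 ! i = w2 ! i"
      proof (cases "i \<in> P")
        case True
        then show ?thesis using same by blast
      next
        case False
        then show ?thesis using w1 w2 i len nth_overwrite[of i w1 P v] nth_overwrite[of i w2 P v] by simp
      qed
    qed (rule len)
  qed
  then have "card ?F \<le> card (Pow P)" by (rule card_inj_on_le) (auto simp: assms)
  then show ?thesis using assms by (simp add: card_Pow)
qed

text \<open>Overwriting block \<open>B\<close> with the pattern maps the words avoiding blocks \<open>0, \<dots>, B - 1\<close>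
  into the words matching block \<open>B\<close>, at most \<open>2\<^sup>k\<close> to one.\<close>
lemma card_avoiding_words_Suc:
  assumes below: "\<And>j b. j < k \<Longrightarrow> b < Suc B \<Longrightarrow> pos j b < N"
    and inj: "inj_on (\<lambda>(j, b). pos j b) ({..<k} \<times> {..<Suc B})"
  shows "2 ^ k * card (avoiding_words N k pos \<beta> (Suc B))
    \<le> (2 ^ k - 1) * card (avoiding_words N k pos \<beta> B)"
proof -
  let ?G = "avoiding_words N k pos \<beta> B"
  let ?E = "{w \<in> ?G. \<forall>j<k. w ! pos j B = \<beta> j}"
  let ?P = "(\<lambda>j. pos j B) ` {..<k}"
  let ?v = "\<lambda>i. \<beta> (the_inv_into {..<k} (\<lambda>j. pos j B) i)"
  have inj_B: "inj_on (\<lambda>j. pos j B) {..<k}"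
    using inj by (auto simp: inj_on_def)
  have fresh: "pos j b \<notin> ?P" if "j < k" "b < B" for j b
    using inj that by (fastforce simp: inj_on_def)
  have "avoiding_words N k pos \<beta> (Suc B) = ?G - ?E"
    unfolding avoiding_words_def by (auto simp: less_Suc_eq)
  then have card_Suc: "card (avoiding_words N k pos \<beta> (Suc B)) = card ?G - card ?E"
    using finite_avoiding_words by (simp add: card_Diff_subset)
  have "overwrite ?P ?v w \<in> ?E" if w: "w \<in> ?G" for w
  proof -
    have len: "length w = N" using w unfolding avoiding_words_def by simp
    have "\<not> (\<forall>j<k. overwrite ?P ?v w ! pos j b = \<beta> j)" if b: "b < B" for b
    proof -
      obtain j where j: "j < k" "w ! pos j b \<noteq> \<beta> j"
        using w b unfolding avoiding_words_def by auto
      have "overwrite ?P ?v w ! pos j b = w ! pos j b"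
        using fresh[OF j(1) b] below[OF j(1)] b len by (simp add: nth_overwrite)
      then show ?thesis using j by auto
    qed
    moreover have "overwrite ?P ?v w ! pos j B = \<beta> j" if "j < k" for j
      using that below[of j B] len the_inv_into_f_f[OF inj_B] by (simp add: nth_overwrite)
    ultimately show ?thesis using len unfolding avoiding_words_def by simp
  qed
  then have "overwrite ?P ?v ` ?G \<subseteq> ?E" by blast
  then have image_le: "card (overwrite ?P ?v ` ?G) \<le> card ?E"
    by (intro card_mono) (simp_all add: finite_avoiding_words)
  have "card ?P = k" using card_image[OF inj_B] by simp
  then have "card {w \<in> ?G. overwrite ?P ?v w = u} \<le> 2 ^ k" for u
    using card_overwrite_fibre_le[of ?P ?G ?v u] by simp
  then have "card ?G \<le> 2 ^ k * card (overwrite ?P ?v ` ?G)"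
    by (intro card_le_mult_card_image finite_avoiding_words)
  then have "card ?G \<le> 2 ^ k * card ?E" using image_le by (meson le_trans mult_le_mono2)
  then show ?thesis unfolding card_Suc by (simp add: diff_mult_distrib diff_mult_distrib2)
qed

lemma card_avoiding_words:
  assumes "\<And>j b. j < k \<Longrightarrow> b < B \<Longrightarrow> pos j b < N"
    and "inj_on (\<lambda>(j, b). pos j b) ({..<k} \<times> {..<B})"
  shows "2 ^ (k * B) * card (avoiding_words N k pos \<beta> B) \<le> (2 ^ k - 1) ^ B * 2 ^ N"
  using assms
proof (induction B)
  case 0
  have "avoiding_words N k pos \<beta> 0 = {w. set w \<subseteq> UNIV \<and> length w = N}"
    unfolding avoiding_words_def by auto
  then show ?case using card_lists_length_eq[of "UNIV :: bool set" N] by simp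
next
  case (Suc B)
  have "inj_on (\<lambda>(j, b). pos j b) ({..<k} \<times> {..<B})"
    using Suc.prems(2) by (rule inj_on_subset) auto
  then have IH: "2 ^ (k * B) * card (avoiding_words N k pos \<beta> B) \<le> (2 ^ k - 1) ^ B * 2 ^ N"
    using Suc.prems(1) by (intro Suc.IH) auto
  have "2 ^ (k * Suc B) * card (avoiding_words N k pos \<beta> (Suc B))
      = 2 ^ (k * B) * (2 ^ k * card (avoiding_words N k pos \<beta> (Suc B)))"
    by (simp add: power_add ac_simps)
  also have "\<dots> \<le> 2 ^ (k * B) * ((2 ^ k - 1) * card (avoiding_words N k pos \<beta> B))"
    using card_avoiding_words_Suc[OF Suc.prems] by (rule mult_le_mono2)
  also have "\<dots> = (2 ^ k - 1) * (2 ^ (k * B) * card (avoiding_words N k pos \<beta> B))"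
    by (simp add: ac_simps)
  also have "\<dots> \<le> (2 ^ k - 1) * ((2 ^ k - 1) ^ B * 2 ^ N)"
    using IH by (rule mult_le_mono2)
  finally show ?case by (simp add: ac_simps)
qed

lemma two_mult_pred_power_le_power:
  fixes M :: nat
  assumes "1 \<le> M"
  shows "2 * (M - 1) ^ M \<le> M ^ M"
proof -
  obtain n where M: "M = Suc n" using assms by (cases M) auto
  have bernoulli: "n ^ Suc m + Suc m * n ^ m \<le> (n + 1) ^ Suc m" for m
  proof (induction m)
    case (Suc m)
    have "n ^ Suc (Suc m) + Suc (Suc m) * n ^ Suc m \<le> (n + 1) * (n ^ Suc m + Suc m * n ^ m)"
      by (simp add: algebra_simps)
    also have "\<dots> \<le> (n + 1) * (n + 1) ^ Suc m" using Suc by (rule mult_le_mono2)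
    finally show ?case by simp
  qed simp
  have "n ^ Suc n \<le> Suc n * n ^ n" by simp
  then show ?thesis using bernoulli[of n] M by simp
qed

lemma card_avoiding_words_le:
  assumes "\<And>j b. j < k \<Longrightarrow> b < B \<Longrightarrow> pos j b < N"
    and "inj_on (\<lambda>(j, b). pos j b) ({..<k} \<times> {..<B})"
    and B: "B = (2 * t + 1) * 2 ^ k"
  shows "2 ^ (2 * t + 1) * card (avoiding_words N k pos \<beta> B) \<le> 2 ^ N"
proof -
  define M :: nat where "M = 2 ^ k"
  have M: "1 \<le> M" unfolding M_def by simp
  have "(2 * (M - 1) ^ M) ^ (2 * t + 1) \<le> (M ^ M) ^ (2 * t + 1)"
    using two_mult_pred_power_le_power[OF M] by (rule power_mono) simp
  moreover have "B = M * (2 * t + 1)" unfolding B M_def by simp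
  ultimately have decay: "2 ^ (2 * t + 1) * (M - 1) ^ B \<le> M ^ B"
    by (simp only: power_mult_distrib power_mult)
  have "M ^ B * card (avoiding_words N k pos \<beta> B) \<le> (M - 1) ^ B * 2 ^ N"
    using card_avoiding_words[OF assms(1,2)] unfolding M_def by (simp add: power_mult)
  then have "M ^ B * (2 ^ (2 * t + 1) * card (avoiding_words N k pos \<beta> B))
      \<le> 2 ^ (2 * t + 1) * (M - 1) ^ B * 2 ^ N"
    by (metis (no_types, lifting) mult.assoc mult.left_commute mult_le_mono2)
  also have "\<dots> \<le> M ^ B * 2 ^ N" using decay by (rule mult_right_mono) simp
  finally show ?thesis using M by simp
qed

section \<open>Compressing words that miss a computable block pattern\<close>

locale computable_block_pattern =
  fixes k :: nat and pos :: "nat \<Rightarrow> nat \<Rightarrow> nat" and \<beta> :: "nat \<Rightarrow> bool"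
  assumes computable_pos: "j < k \<Longrightarrow> computable 1 (\<lambda>xs. pos j (xs ! 0))"
    and inj_pos: "inj_on (\<lambda>(j, b). pos j b) ({..<k} \<times> UNIV)"
begin

definition matches :: "nat \<Rightarrow> nat \<Rightarrow> bool" where
  "matches y b \<longleftrightarrow> (\<forall>j<k. code_bit y (pos j b) = \<beta> j)"

definition avoids :: "nat \<Rightarrow> nat \<Rightarrow> bool" where
  "avoids y B \<longleftrightarrow> (\<forall>b<B. \<not> matches y b)"

definition blocks :: "nat \<Rightarrow> nat" where
  "blocks t = (2 * t + 1) * 2 ^ k"

definition word_len :: "nat \<Rightarrow> nat" where
  "word_len t = (\<Sum>b<blocks t. \<Sum>j<k. Suc (pos j b))"

definition index_len :: "nat \<Rightarrow> nat" where
  "index_len t = word_len t - (2 * t + 1)"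

definition rank :: "nat \<Rightarrow> nat \<Rightarrow> nat" where
  "rank y t = (\<Sum>y'<y. of_bool (2 ^ word_len t \<le> y' + 1 \<and> avoids y' (blocks t)))"

text \<open>The program \<open>1\<^sup>t 0 w\<close> with \<open>|w| = index_len t\<close> outputs the word of length
  \<open>word_len t\<close> that avoids the first \<open>blocks t\<close> blocks and whose rank among these words
  (ordered by code) equals the rank of \<open>w\<close> among the words of length \<open>index_len t\<close>.\<close>
definition decodes :: "nat \<Rightarrow> nat \<Rightarrow> bool" where
  "decodes x y \<longleftrightarrow> (let t = unary_prefix x; e = after_unary_prefix x in
     x + 2 = 2 ^ (t + 1) + 2 ^ t + 2 ^ (t + 1) * e \<and> codes_length (index_len t) e \<and>
     codes_length (word_len t) y \<and> avoids y (blocks t) \<and> rank y t + 2 ^ index_len t = e + 1)"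

lemma decidable_matches:
  assumes "computable n f" and "computable n g"
  shows "decidable n (\<lambda>xs. matches (f xs) (g xs))"
  unfolding matches_def
  by (intro decidable_all_below_const decidable_iff decidable_code_bit decidable_const assms
      computable_compose1[OF computable_pos])

lemma decidable_avoids:
  assumes "computable n f" and "computable n g"
  shows "decidable n (\<lambda>xs. avoids (f xs) (g xs))"
proof -
  have "decidable 2 (\<lambda>xs. \<not> matches (xs ! 1) (xs ! 0))"
    by (intro decidable_not decidable_matches computable_proj) simp_all
  then show ?thesis
    unfolding avoids_def by (rule decidable_ball[where P = "\<lambda>a b. \<not> matches b a", OF _ assms(2,1)])
qed

lemma computable_blocks: "computable n g \<Longrightarrow> computable n (\<lambda>xs. blocks (g xs))"
  unfolding blocks_def by (intro computable_mult computable_add computable_const)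

lemma computable_word_len: "computable n g \<Longrightarrow> computable n (\<lambda>xs. word_len (g xs))"
proof -
  assume g: "computable n g"
  have "computable 2 (\<lambda>xs. \<Sum>j<k. Suc (pos j (xs ! 0)))"
    by (intro computable_sum_below_const computable_Suc computable_compose1[OF computable_pos]
        computable_proj) simp_all
  then have "computable n (\<lambda>xs. \<Sum>b<blocks (g xs). \<Sum>j<k. Suc (pos j b))"
    by (rule computable_sum_lessThan[where F = "\<lambda>a b. \<Sum>j<k. Suc (pos j a)",
          OF _ computable_blocks[OF g] g])
  then show ?thesis unfolding word_len_def .
qed

lemma computable_index_len: "computable n g \<Longrightarrow> computable n (\<lambda>xs. index_len (g xs))"
  unfolding index_len_def
  by (intro computable_diff computable_word_len computable_add computable_mult computable_const)

lemma computable_rank: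
  assumes "computable n f" and "computable n g"
  shows "computable n (\<lambda>xs. rank (f xs) (g xs))"
proof -
  have "decidable 2 (\<lambda>xs. 2 ^ word_len (xs ! 1) \<le> xs ! 0 + 1 \<and> avoids (xs ! 0) (blocks (xs ! 1)))"
    by (intro decidable_conj decidable_le decidable_avoids computable_power2 computable_word_len
        computable_add computable_blocks computable_proj computable_const) simp_all
  then have "computable 2
      (\<lambda>xs. of_bool (2 ^ word_len (xs ! 1) \<le> xs ! 0 + 1 \<and> avoids (xs ! 0) (blocks (xs ! 1))))"
    unfolding decidable_def .
  then show ?thesis
    unfolding rank_def
    by (rule computable_sum_lessThan[OF _ assms,
          where F = "\<lambda>a b. of_bool (2 ^ word_len b \<le> a + 1 \<and> avoids a (blocks b))"])
qed

lemma decidable_decodes: "decidable 2 (\<lambda>xs. decodes (xs ! 1) (xs ! 0))"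
proof -
  have x: "computable 2 (\<lambda>xs. xs ! 1)" and y: "computable 2 (\<lambda>xs. xs ! 0)"
    by (simp_all add: computable_proj)
  show ?thesis
    unfolding decodes_def Let_def
    by (intro decidable_conj decidable_eq decidable_codes_length decidable_avoids computable_add
        computable_mult computable_power2 computable_const computable_unary_prefix
        computable_after_unary_prefix computable_index_len computable_word_len computable_rank
        computable_blocks x y)
qed

lemma decodes_imp_unary_header:
  assumes "decodes x y"
  shows "\<exists>t w. x = word_code (replicate t True @ False # w) \<and> length w = index_len t"
proof -
  obtain w where w: "word_code w = after_unary_prefix x" by (metis surj_word_code surjD)
  let ?t = "unary_prefix x"
  have "length w = index_len ?t"
    using assms unfolding decodes_def Let_def w[symmetric] codes_length_word_code by simp
  moreover have "x = word_code (replicate ?t True @ False # w)"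
    using assms word_code_unary_header[of ?t w] unfolding decodes_def Let_def w[symmetric] by simp
  ultimately show ?thesis by blast
qed

lemma rank_strict_mono:
  assumes "y1 < y2" and "2 ^ word_len t \<le> y1 + 1" and "avoids y1 (blocks t)"
  shows "rank y1 t < rank y2 t"
proof -
  let ?f = "\<lambda>y'. of_bool (2 ^ word_len t \<le> y' + 1 \<and> avoids y' (blocks t)) :: nat"
  have "{..<y2} = {..<y1} \<union> {y1..<y2}" using assms(1) by auto
  then have "rank y2 t = sum ?f ({..<y1} \<union> {y1..<y2})" unfolding rank_def by simp
  also have "\<dots> = rank y1 t + (\<Sum>y'\<in>{y1..<y2}. ?f y')"
    unfolding rank_def by (rule sum.union_disjoint) auto
  finally have "rank y2 t = rank y1 t + (\<Sum>y'\<in>{y1..<y2}. ?f y')" .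
  moreover have "?f y1 \<le> (\<Sum>y'\<in>{y1..<y2}. ?f y')"
    by (rule member_le_sum) (use assms(1) in auto)
  ultimately show ?thesis using assms(2,3) by simp
qed

lemma decodes_functional:
  assumes "decodes x y1" and "decodes x y2"
  shows "y1 = y2"
proof (rule linorder_cases[of y1 y2])
  assume "y1 < y2"
  then show ?thesis
    using rank_strict_mono[of y1 y2 "unary_prefix x"] assms
    unfolding decodes_def Let_def codes_length_def by auto
next
  assume "y2 < y1"
  then show ?thesis
    using rank_strict_mono[of y2 y1 "unary_prefix x"] assms
    unfolding decodes_def Let_def codes_length_def by auto
qed

lemma decodes_word_code:
  assumes "length s = word_len t" and "avoids (word_code s) (blocks t)"
    and "rank (word_code s) t < 2 ^ index_len t"
  shows "\<exists>w. length w = index_len t \<and> decodes (word_code (replicate t True @ False # w)) (word_code s)"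
proof -
  obtain w where w: "word_code w = rank (word_code s) t + 2 ^ index_len t - 1"
    by (metis surj_word_code surjD)
  have index: "rank (word_code s) t + 2 ^ index_len t = word_code w + 1"
    unfolding w by simp
  have "codes_length (index_len t) (word_code w)"
    unfolding codes_length_def w using assms(3) by (simp add: algebra_simps)
  then have "length w = index_len t" by (simp add: codes_length_word_code)
  moreover have "decodes (word_code (replicate t True @ False # w)) (word_code s)"
    unfolding decodes_def Let_def unary_prefix_word_code after_unary_prefix_word_code
    using word_code_unary_header[of t w] index \<open>codes_length (index_len t) (word_code w)\<close> assms(1,2)
    by (simp add: codes_length_word_code)
  ultimately show ?thesis by blast
qed

lemma decoder_exists:
  "\<exists>c. prefix_free_machine c \<and> (\<forall>p s. runs c p s \<longleftrightarrow> decodes (word_code p) (word_code s))"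
proof -
  have "\<exists>c. \<forall>x y. rec_eval c [x] y \<longleftrightarrow> decodes x y"
    by (rule code_of_decidable_graph[OF decidable_decodes]) (rule decodes_functional)
  then obtain c where c: "\<And>x y. rec_eval c [x] y \<longleftrightarrow> decodes x y" by blast
  then have runs: "runs c p s \<longleftrightarrow> decodes (word_code p) (word_code s)" for p s
    by (simp add: runs_def)
  have "prefix_free_machine c"
  proof (rule prefix_free_machineI[where L = index_len])
    fix p
    assume "halts c p"
    then obtain s where "decodes (word_code p) (word_code s)" unfolding halts_def runs by blast
    then obtain t w where "word_code p = word_code (replicate t True @ False # w)" "length w = index_len t"
      using decodes_imp_unary_header by blast
    then show "\<exists>t w. p = replicate t True @ False # w \<and> length w = index_len t"
      using inj_word_code by (auto dest: injD)
  qed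
  then show ?thesis using runs by blast
qed

lemma pos_less_word_len:
  assumes "j < k" and "b < blocks t"
  shows "pos j b < word_len t"
proof -
  have "Suc (pos j b) \<le> (\<Sum>j<k. Suc (pos j b))"
    by (rule member_le_sum) (use assms(1) in auto)
  also have "\<dots> \<le> word_len t"
    unfolding word_len_def
    by (rule member_le_sum[where f = "\<lambda>b. \<Sum>j<k. Suc (pos j b)"]) (use assms(2) in auto)
  finally show ?thesis by simp
qed

lemma word_len_eq:
  assumes "0 < k"
  shows "word_len t = index_len t + (2 * t + 1)"
proof -
  have "blocks t \<le> word_len t"
  proof -
    have "0 < (\<Sum>j<k. Suc (pos j b))" for b
      using assms by (intro sum_pos) auto
    then have "1 \<le> (\<Sum>j<k. Suc (pos j b))" for b
      by (simp add: Suc_le_eq)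
    then have "(\<Sum>b<blocks t. 1) \<le> word_len t" unfolding word_len_def by (intro sum_mono)
    then show ?thesis by simp
  qed
  moreover have "2 * t + 1 \<le> blocks t"
    unfolding blocks_def using mult_le_mono2[of 1 "2 ^ k" "2 * t + 1"] by simp
  ultimately show ?thesis unfolding index_len_def by simp
qed

lemma avoids_word_code_iff:
  assumes "length w = word_len t"
  shows "avoids (word_code w) (blocks t) \<longleftrightarrow> w \<in> avoiding_words (word_len t) k pos \<beta> (blocks t)"
  using assms pos_less_word_len
  unfolding avoids_def matches_def avoiding_words_def code_bit_word_code by auto

lemma rank_less:
  assumes "0 < k" and "length s = word_len t" and "avoids (word_code s) (blocks t)"
  shows "rank (word_code s) t < 2 ^ index_len t"
proof -
  let ?A = "avoiding_words (word_len t) k pos \<beta> (blocks t)"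
  let ?R = "{y. y < word_code s \<and> 2 ^ word_len t \<le> y + 1 \<and> avoids y (blocks t)}"
  have rank: "rank (word_code s) t = card ?R"
    unfolding rank_def by (simp add: sum.If_cases Int_def lessThan_def)
  have "insert (word_code s) ?R \<subseteq> word_code ` ?A"
  proof
    fix y
    assume y: "y \<in> insert (word_code s) ?R"
    obtain w where w: "word_code w = y" by (metis surj_word_code surjD)
    have "codes_length (word_len t) (word_code s)" using assms(2) by (simp add: codes_length_word_code)
    then have "codes_length (word_len t) y \<and> avoids y (blocks t)"
      using y assms(3) unfolding codes_length_def by auto
    then have "w \<in> ?A" using avoids_word_code_iff by (auto simp: w[symmetric] codes_length_word_code)
    then show "y \<in> word_code ` ?A" using w by blast
  qed
  then have "card (insert (word_code s) ?R) \<le> card (word_code ` ?A)"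
    by (intro card_mono finite_imageI finite_avoiding_words)
  also have "\<dots> \<le> card ?A" by (intro card_image_le finite_avoiding_words)
  finally have "card (insert (word_code s) ?R) \<le> card ?A" .
  moreover have "2 ^ (2 * t + 1) * card ?A \<le> 2 ^ (2 * t + 1) * 2 ^ index_len t"
  proof -
    have "inj_on (\<lambda>(j, b). pos j b) ({..<k} \<times> {..<blocks t})"
      using inj_pos by (rule inj_on_subset) auto
    then have "2 ^ (2 * t + 1) * card ?A \<le> 2 ^ word_len t"
      using pos_less_word_len by (intro card_avoiding_words_le) (auto simp: blocks_def)
    then show ?thesis using word_len_eq[OF assms(1)] by (simp add: power_add)
  qed
  ultimately have "card (insert (word_code s) ?R) \<le> 2 ^ index_len t" by simp
  then show ?thesis using rank by (simp add: card_insert_disjoint)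
qed

lemma avoids_initial_segment:
  assumes "\<forall>b. \<not> (\<forall>j<k. \<alpha> (pos j b) = \<beta> j)"
  shows "avoids (word_code (initial_segment \<alpha> (word_len t))) (blocks t)"
  using assms pos_less_word_len
  unfolding avoids_def matches_def code_bit_word_code initial_segment_def by auto

theorem KC_complex_matches_block:
  assumes "universal_prefix_machine u" and "KC_complex u \<alpha>"
  shows "\<exists>b. \<forall>j<k. \<alpha> (pos j b) = \<beta> j"
proof (rule ccontr)
  assume never: "\<nexists>b. \<forall>j<k. \<alpha> (pos j b) = \<beta> j"
  then have "0 < k" by (rule contrapos_np) simp
  obtain c where c: "prefix_free_machine c"
    and runs: "\<And>p s. runs c p s \<longleftrightarrow> decodes (word_code p) (word_code s)"
    using decoder_exists by blast
  obtain m where m: "\<And>n p. runs c p (initial_segment \<alpha> n) \<Longrightarrow> n \<le> length p + m"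
    using KC_complex_incompressible[OF assms c] by blast
  define t where "t = Suc m"
  define s where "s = initial_segment \<alpha> (word_len t)"
  have len: "length s = word_len t" by (simp add: s_def initial_segment_def)
  have avoids: "avoids (word_code s) (blocks t)"
    unfolding s_def using never by (intro avoids_initial_segment) blast
  obtain w where "length w = index_len t" and "runs c (replicate t True @ False # w) s"
    using decodes_word_code[OF len avoids rank_less[OF \<open>0 < k\<close> len avoids]] runs by blast
  then have "word_len t \<le> Suc t + index_len t + m" using m unfolding s_def by fastforce
  then show False using word_len_eq[OF \<open>0 < k\<close>] unfolding t_def by simp
qed

end

corollary KC_complex_matches_pattern:
  assumes "universal_prefix_machine u" and "KC_complex u \<alpha>" and "finite P"
    and computable: "\<And>f \<beta>. (f, \<beta>) \<in> P \<Longrightarrow> computable 1 (\<lambda>xs. f (xs ! 0))"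
    and disjoint: "\<And>f \<beta> g \<gamma> b b'. (f, \<beta>) \<in> P \<Longrightarrow> (g, \<gamma>) \<in> P \<Longrightarrow> f b = g b'
      \<Longrightarrow> (f, \<beta>) = (g, \<gamma>) \<and> b = b'"
  shows "\<exists>b. \<forall>(f, \<beta>) \<in> P. \<alpha> (f b) = \<beta>"
proof -
  obtain h where h: "bij_betw h {..<card P} P"
    using ex_bij_betw_nat_finite[OF assms(3)] by (auto simp: atLeast0LessThan)
  then have h_in: "j < card P \<Longrightarrow> h j \<in> P" for j by (auto dest: bij_betwE)
  interpret computable_block_pattern "card P" "\<lambda>j. fst (h j)" "\<lambda>j. snd (h j)"
  proof
    show "computable 1 (\<lambda>xs. fst (h j) (xs ! 0))" if "j < card P" for j
      using computable h_in[OF that] by (metis prod.collapse)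
    show "inj_on (\<lambda>(j, b). fst (h j) b) ({..<card P} \<times> UNIV)"
    proof (rule inj_onI, clarify)
      fix j b j' b'
      assume "j < card P" "j' < card P" "fst (h j) b = fst (h j') b'"
      then have "h j = h j' \<and> b = b'"
        using disjoint[of "fst (h j)" "snd (h j)" "fst (h j')" "snd (h j')" b b'] h_in by simp
      then show "j = j' \<and> b = b'"
        using h \<open>j < card P\<close> \<open>j' < card P\<close> by (auto simp: bij_betw_def dest: inj_onD)
    qed
  qed
  obtain b where b: "\<forall>j<card P. \<alpha> (fst (h j) b) = snd (h j)"
    using KC_complex_matches_block[OF assms(1,2)] by blast
  have "\<alpha> (f b) = \<beta>" if entry: "(f, \<beta>) \<in> P" for f \<beta>
  proof -
    have "(f, \<beta>) \<in> h ` {..<card P}" using h entry by (simp add: bij_betw_def)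
    then obtain j where "j < card P" "h j = (f, \<beta>)" by (metis imageE lessThan_iff)
    then show ?thesis using b by (metis fst_conv snd_conv)
  qed
  then show ?thesis by blast
qed

section \<open>The diagram of a complex sequence\<close>

lemma KC_complex_level_pattern:
  fixes \<psi> :: "nat \<Rightarrow> nat \<Rightarrow> nat \<Rightarrow> nat"
  assumes u: "universal_prefix_machine u" and kc: "KC_complex u \<alpha>"
    and code: "\<And>j n m. j < l - 1 \<Longrightarrow> rec_eval c [j, n, m] (\<psi> j n m)"
    and inj: "inj_on (\<lambda>(i, n, m). \<psi> i n m) ({..<l - 1} \<times> UNIV \<times> UNIV)"
    and i: "i < l"
    and fin: "finite X" "finite Y" "finite X'" "finite Y'"
    and disj: "X \<inter> Y = {}" "X' \<inter> Y' = {}"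
    and up: "X \<union> Y \<noteq> {} \<Longrightarrow> i + 1 < l"
    and down: "X' \<union> Y' \<noteq> {} \<Longrightarrow> 0 < i"
  shows "\<exists>n\<ge>n0. (\<forall>m\<in>X. \<alpha> (\<psi> i n m)) \<and> (\<forall>m\<in>Y. \<not> \<alpha> (\<psi> i n m)) \<and>
    (\<forall>m\<in>X'. \<alpha> (\<psi> (i - 1) m n)) \<and> (\<forall>m\<in>Y'. \<not> \<alpha> (\<psi> (i - 1) m n))"
proof -
  define out where "out m b = \<psi> i (n0 + b) m" for m b
  define inc where "inc m b = \<psi> (i - 1) m (n0 + b)" for m b
  define P where "P = (\<lambda>m. (out m, True)) ` X \<union> (\<lambda>m. (out m, False)) ` Y
    \<union> (\<lambda>m. (inc m, True)) ` X' \<union> (\<lambda>m. (inc m, False)) ` Y'"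
  have \<psi>_eq: "\<psi> a b c = \<psi> a' b' c' \<Longrightarrow> a < l - 1 \<Longrightarrow> a' < l - 1 \<Longrightarrow> a = a' \<and> b = b' \<and> c = c'"
    for a b c a' b' c'
    using inj_onD[OF inj, of "(a, b, c)" "(a', b', c')"] by auto
  have out_lvl: "i < l - 1" if "m \<in> X \<union> Y" for m
    using up that by (metis empty_iff less_diff_conv)
  have inc_lvl: "0 < i \<and> i - 1 < l - 1" if "m \<in> X' \<union> Y'" for m
  proof -
    have "0 < i" using down that by blast
    then show ?thesis using i by linarith
  qed
  have computable_out: "computable 1 (\<lambda>xs. out m (xs ! 0))" if "m \<in> X \<union> Y" for m
    unfolding out_def using code[OF out_lvl[OF that]] by (rule computable_shifted_args)
  have computable_inc: "computable 1 (\<lambda>xs. inc m (xs ! 0))" if "m \<in> X' \<union> Y'" for m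
    unfolding inc_def using code[OF conjunct2[OF inc_lvl[OF that]]] by (rule computable_shifted_args)
  have out_inj: "m = m' \<and> b = b'" if eq: "out m b = out m' b'" and m: "m \<in> X \<union> Y"
    for m m' b b'
    using \<psi>_eq[OF eq[unfolded out_def] out_lvl[OF m] out_lvl[OF m]] by simp
  have inc_inj: "m = m' \<and> b = b'" if eq: "inc m b = inc m' b'" and m: "m \<in> X' \<union> Y'"
    for m m' b b'
    using \<psi>_eq[OF eq[unfolded inc_def]] inc_lvl[OF m] by simp
  have out_inc: False
    if eq: "out m b = inc m' b'" and m: "m \<in> X \<union> Y" and m': "m' \<in> X' \<union> Y'" for m m' b b'
    using \<psi>_eq[OF eq[unfolded out_def inc_def] out_lvl[OF m]] inc_lvl[OF m'] by linarith
  have "\<exists>b. \<forall>(f, \<beta>) \<in> P. \<alpha> (f b) = \<beta>"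
  proof (rule KC_complex_matches_pattern[OF u kc])
    show "finite P" unfolding P_def using fin by simp
    show "computable 1 (\<lambda>xs. f (xs ! 0))" if "(f, \<beta>) \<in> P" for f \<beta>
      using that computable_out computable_inc unfolding P_def by auto
    show "(f, \<beta>) = (g, \<gamma>) \<and> b = b'" if "(f, \<beta>) \<in> P" "(g, \<gamma>) \<in> P" "f b = g b'" for f \<beta> g \<gamma> b b'
      using that disj unfolding P_def
      by (auto dest: out_inj inc_inj out_inc out_inc[OF sym])
  qed
  then obtain b where "\<forall>(f, \<beta>) \<in> P. \<alpha> (f b) = \<beta>" by blast
  then show ?thesis unfolding P_def out_def inc_def by (intro exI[of _ "n0 + b"]) auto
qed

lemma S_alpha_iff: "S_alpha l \<psi> \<alpha> (a, b) (c, d) \<longleftrightarrow> c = a + 1 \<and> a < l - 1 \<and> \<alpha> (\<psi> a b d)"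
  unfolding S_alpha_def by auto

lemma snd_image_disjoint:
  assumes "A \<union> B \<subseteq> {a} \<times> UNIV" and "A \<inter> B = {}"
  shows "snd ` A \<inter> snd ` B = {}"
proof -
  have same: "x = y" if "x \<in> A" "y \<in> B" "snd x = snd y" for x y
  proof -
    have "fst x = a" "fst y = a" using assms(1) that(1,2) by auto
    then show ?thesis using that(3) by (simp add: prod_eq_iff)
  qed
  show ?thesis
  proof (rule equals0I)
    fix v
    assume "v \<in> snd ` A \<inter> snd ` B"
    then obtain x y where "x \<in> A" "y \<in> B" "snd x = snd y" by auto
    then show False using same assms(2) by blast
  qed
qed

lemma S_alpha_extension:
  fixes \<psi> :: "nat \<Rightarrow> nat \<Rightarrow> nat \<Rightarrow> nat"
  assumes u: "universal_prefix_machine u" and kc: "KC_complex u \<alpha>"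
    and code: "\<And>j n m. j < l - 1 \<Longrightarrow> rec_eval c [j, n, m] (\<psi> j n m)"
    and inj: "inj_on (\<lambda>(i, n, m). \<psi> i n m) ({..<l - 1} \<times> UNIV \<times> UNIV)"
    and i: "i < l"
    and fin: "finite X" "finite Y" "finite Z" "finite X'" "finite Y'"
    and up: "X \<union> Y \<subseteq> {i + 1} \<times> UNIV" "X \<inter> Y = {}" "X \<union> Y \<noteq> {} \<Longrightarrow> i + 1 < l"
    and down: "X' \<union> Y' \<subseteq> {i - 1} \<times> UNIV" "X' \<inter> Y' = {}" "X' \<union> Y' \<noteq> {} \<Longrightarrow> 0 < i"
  shows "\<exists>n. (i, n) \<notin> Z \<and>
    (\<forall>x\<in>X. S_alpha l \<psi> \<alpha> (i, n) x) \<and> (\<forall>x'\<in>X'. S_alpha l \<psi> \<alpha> x' (i, n)) \<and>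
    (\<forall>y\<in>Y. \<not> S_alpha l \<psi> \<alpha> (i, n) y) \<and> (\<forall>y'\<in>Y'. \<not> S_alpha l \<psi> \<alpha> y' (i, n))"
proof -
  define n0 where "n0 = Suc (Max (insert 0 (snd ` Z)))"
  have disj: "snd ` X \<inter> snd ` Y = {}" "snd ` X' \<inter> snd ` Y' = {}"
    using snd_image_disjoint[OF up(1,2)] snd_image_disjoint[OF down(1,2)] .
  have levels: "snd ` X \<union> snd ` Y \<noteq> {} \<Longrightarrow> i + 1 < l" "snd ` X' \<union> snd ` Y' \<noteq> {} \<Longrightarrow> 0 < i"
    using up(3) down(3) by auto
  have "\<exists>n\<ge>n0. (\<forall>m\<in>snd ` X. \<alpha> (\<psi> i n m)) \<and> (\<forall>m\<in>snd ` Y. \<not> \<alpha> (\<psi> i n m)) \<and>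
      (\<forall>m\<in>snd ` X'. \<alpha> (\<psi> (i - 1) m n)) \<and> (\<forall>m\<in>snd ` Y'. \<not> \<alpha> (\<psi> (i - 1) m n))"
    using fin by (intro KC_complex_level_pattern[OF u kc code inj i _ _ _ _ disj levels]) simp_all
  then obtain n where "n \<ge> n0"
    and pattern: "\<forall>m\<in>snd ` X. \<alpha> (\<psi> i n m)" "\<forall>m\<in>snd ` Y. \<not> \<alpha> (\<psi> i n m)"
      "\<forall>m\<in>snd ` X'. \<alpha> (\<psi> (i - 1) m n)" "\<forall>m\<in>snd ` Y'. \<not> \<alpha> (\<psi> (i - 1) m n)"
    by (elim exE conjE) (rule that; assumption)
  have "(i, n) \<notin> Z"
  proof
    assume "(i, n) \<in> Z"
    then have "n \<le> Max (insert 0 (snd ` Z))" using fin(3) by (intro Max_ge) force+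
    then show False using \<open>n \<ge> n0\<close> unfolding n0_def by simp
  qed
  moreover have "S_alpha l \<psi> \<alpha> (i, n) x \<longleftrightarrow> \<alpha> (\<psi> i n (snd x))" if x: "x \<in> X \<union> Y" for x
  proof -
    obtain m where "x = (i + 1, m)" using up(1) x by auto
    moreover have "i < l - 1" using up(3) x by force
    ultimately show ?thesis by (simp add: S_alpha_iff)
  qed
  moreover have "S_alpha l \<psi> \<alpha> x (i, n) \<longleftrightarrow> \<alpha> (\<psi> (i - 1) (snd x) n)" if x: "x \<in> X' \<union> Y'" for x
  proof -
    obtain m where "x = (i - 1, m)" using down(1) x by auto
    moreover have "0 < i" using down(3) x by blast
    then have "i - 1 + 1 = i" and "i - 1 < l - 1" using i by linarith+
    ultimately show ?thesis by (simp add: S_alpha_iff)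
  qed
  ultimately show ?thesis using pattern by (intro exI[of _ n]) auto
qed

lemma model_T_S_alpha:
  fixes \<psi> :: "nat \<Rightarrow> nat \<Rightarrow> nat \<Rightarrow> nat"
  assumes u: "universal_prefix_machine u" and kc: "KC_complex u \<alpha>"
    and code: "\<And>j n m. j < l - 1 \<Longrightarrow> rec_eval c [j, n, m] (\<psi> j n m)"
    and inj: "inj_on (\<lambda>(i, n, m). \<psi> i n m) ({..<l - 1} \<times> UNIV \<times> UNIV)"
  shows "model_T l ({..<l} \<times> UNIV) (\<lambda>j. {j} \<times> UNIV) (S_alpha l \<psi> \<alpha>)"
  unfolding model_T_def Let_def
proof (intro conjI allI impI; (elim conjE)?)
  fix i X Y Z X' Y'
  let ?A = "{..<l} \<times> (UNIV :: nat set)" and ?L = "\<lambda>j. {j} \<times> (UNIV :: nat set)"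
  let ?Up = "if i + 1 < l then ?A \<inter> ?L (i + 1) else {}"
  let ?Lo = "if 0 < i then ?A \<inter> ?L (i - 1) else {}"
  assume i: "i < l" and fin: "finite X" "finite Y" "finite Z" "finite X'" "finite Y'"
    and up: "X \<subseteq> ?Up" "Y \<subseteq> ?Up" "X \<inter> Y = {}"
    and down: "X' \<subseteq> ?Lo" "Y' \<subseteq> ?Lo" "X' \<inter> Y' = {}"
    and "Z \<subseteq> ?A \<inter> ?L i"
  have out: "X \<union> Y \<subseteq> {i + 1} \<times> UNIV" "X \<union> Y \<noteq> {} \<Longrightarrow> i + 1 < l"
    using up(1,2) by (auto split: if_splits)
  have inc: "X' \<union> Y' \<subseteq> {i - 1} \<times> UNIV" "X' \<union> Y' \<noteq> {} \<Longrightarrow> 0 < i"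
    using down(1,2) by (auto split: if_splits)
  obtain n where "(i, n) \<notin> Z"
    and "(\<forall>x\<in>X. S_alpha l \<psi> \<alpha> (i, n) x) \<and> (\<forall>x'\<in>X'. S_alpha l \<psi> \<alpha> x' (i, n)) \<and>
      (\<forall>y\<in>Y. \<not> S_alpha l \<psi> \<alpha> (i, n) y) \<and> (\<forall>y'\<in>Y'. \<not> S_alpha l \<psi> \<alpha> y' (i, n))"
    using S_alpha_extension[OF u kc code inj i fin out(1) up(3) out(2) inc(1) down(3) inc(2)]
    by blast
  moreover have "(i, n) \<in> ?A \<inter> ?L i" using i by simp
  ultimately show "\<exists>z\<in>?A \<inter> ?L i - Z.
      (\<forall>x\<in>X. S_alpha l \<psi> \<alpha> z x) \<and> (\<forall>x'\<in>X'. S_alpha l \<psi> \<alpha> x' z) \<and>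
      (\<forall>y\<in>Y. \<not> S_alpha l \<psi> \<alpha> z y) \<and> (\<forall>y'\<in>Y'. \<not> S_alpha l \<psi> \<alpha> y' z)"
    by blast
qed (auto simp: S_alpha_def)

theorem theorem4:
  fixes l :: nat and \<psi> :: "nat \<Rightarrow> nat \<Rightarrow> nat \<Rightarrow> nat"
    and \<alpha> :: "nat \<Rightarrow> bool" and u :: recf
  assumes "l \<ge> 2"
    and "universal_prefix_machine u"
    and "recursive3_on ({..<l - 1} \<times> UNIV \<times> UNIV) \<psi>"
    and "bij_betw (\<lambda>(i, n, m). \<psi> i n m) ({..<l - 1} \<times> UNIV \<times> UNIV) UNIV"
    and "KC_complex u \<alpha>"
  shows "model_T l ({..<l} \<times> UNIV) (\<lambda>j. {j} \<times> UNIV) (S_alpha l \<psi> \<alpha>)"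
proof -
  obtain c where "\<And>j n m. j < l - 1 \<Longrightarrow> rec_eval c [j, n, m] (\<psi> j n m)"
    using assms(3) unfolding recursive3_on_def by fastforce
  moreover have "inj_on (\<lambda>(i, n, m). \<psi> i n m) ({..<l - 1} \<times> UNIV \<times> UNIV)"
    using assms(4) by (rule bij_betw_imp_inj_on)
  ultimately show ?thesis using model_T_S_alpha assms(2,5) by blast
qed

end
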